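(* Let $\sigma(u)=1/(1+e^{-u})$, $\sigma_\tau(u)=\sigma(u/\tau)$ for $\tau>0$, and let $z$ be a standard logistic random variable with density $p_Z(u)=\sigma(u)(1-\sigma(u))$. Let $\eta\in\mathbb{R}$ and let $\mathcal L:[0,1]\to\mathbb{R}$ be continuously differentiable. Consider the binary variable $x\in\{0,1\}$ with $P(x=1)=\sigma(\eta)$, whose true gradient is $\frac{d}{d\eta}\mathbb{E}[\mathcal L(x)]=p_Z(\eta)(\mathcal L(1)-\mathcal L(0))$, and the Gumbel-Softmax estimator $\hat G_\tau=\frac{d}{d\eta}\mathcal L(\sigma_\tau(\eta-z))$. Then $\lim_{\tau\to0^+}\mathbb{E}_z[\hat G_\tau]=p_Z(\eta)(\mathcal L(1)-\mathcal L(0))$, and the bias satisfies $\mathbb{E}_z[\hat G_\tau]-p_Z(\eta)(\mathcal L(1)-\mathcal L(0))=O(\tau)$ as $\tau\to0^+$. *)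

theory Defs
  imports "HOL-Analysis.Analysis" "HOL-Library.Landau_Symbols"
begin

definition sigmoid :: "real \<Rightarrow> real" where
  "sigmoid u = 1 / (1 + exp (- u))"

definition sigmoid_temp :: "real \<Rightarrow> real \<Rightarrow> real" where
  "sigmoid_temp \<tau> u = sigmoid (u / \<tau>)"

definition logistic_density :: "real \<Rightarrow> real" where
  "logistic_density u = sigmoid u * (1 - sigmoid u)"

definition gs_estimator :: "(real \<Rightarrow> real) \<Rightarrow> real \<Rightarrow> real \<Rightarrow> real \<Rightarrow> real" where
  "gs_estimator L \<tau> \<eta> z = deriv (\<lambda>e. L (sigmoid_temp \<tau> (e - z))) \<eta>"

definition gs_expectation :: "(real \<Rightarrow> real) \<Rightarrow> real \<Rightarrow> real \<Rightarrow> real" where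
  "gs_expectation L \<tau> \<eta> = (LINT z|lborel. logistic_density z * gs_estimator L \<tau> \<eta> z)"

end

theory Submission imports Defs begin

text \<open>Write \<open>p\<close> for the logistic density and \<open>g = (L \<circ> \<sigma>)' = (L' \<circ> \<sigma>) * p\<close>. The estimator
  equals \<open>g ((\<eta> - z) / \<tau>) / \<tau>\<close>, so the substitution \<open>z = \<eta> - \<tau> u\<close> turns its expectation into
  \<open>\<integral> p (\<eta> - \<tau> u) g u du\<close>, whereas \<open>\<integral> g = L 1 - L 0\<close> by the fundamental theorem of calculus.
  The bias is therefore \<open>\<integral> (p (\<eta> - \<tau> u) - p \<eta>) g u du\<close>. As \<open>p\<close> is 1-Lipschitz and
  \<open>\<bar>g\<bar> \<le> (max \<bar>L'\<bar>) p\<close>, it is at most \<open>\<tau> (max \<bar>L'\<bar>) \<integral> \<bar>u\<bar> p u du\<close>, and the logistic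
  distribution has a finite first absolute moment.\<close>

lemma sigmoid_gt_zero: "0 < sigmoid u"
  and sigmoid_less_one: "sigmoid u < 1"
  unfolding sigmoid_def by (auto simp: add_pos_pos)

lemma sigmoid_in_unit_interval: "sigmoid u \<in> {0..1}"
  using sigmoid_gt_zero[of u] sigmoid_less_one[of u] by simp

lemma logistic_density_exp: "logistic_density u = exp (- u) / (1 + exp (- u))^2"
proof -
  have "1 + exp (- u) > 0" by (simp add: add_pos_pos)
  then show ?thesis unfolding logistic_density_def sigmoid_def
    by (simp add: field_simps power2_eq_square)
qed

lemma has_real_derivative_sigmoid: "(sigmoid has_real_derivative logistic_density u) (at u)"
proof -
  have "1 + exp (- u) > 0" by (simp add: add_pos_pos)
  then have "((\<lambda>u. 1 / (1 + exp (- u))) has_real_derivative exp (- u) / (1 + exp (- u))^2) (at u)"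
    by (auto intro!: derivative_eq_intros simp: power2_eq_square field_simps)
  then show ?thesis unfolding sigmoid_def[abs_def] by (simp add: logistic_density_exp)
qed

lemma logistic_density_nonneg: "0 \<le> logistic_density u"
  unfolding logistic_density_def using sigmoid_gt_zero[of u] sigmoid_less_one[of u] by simp

lemma logistic_density_le_quarter: "logistic_density u \<le> 1 / 4"
proof -
  have "0 \<le> (2 * sigmoid u - 1)^2" by simp
  then show ?thesis unfolding logistic_density_def by (simp add: power2_eq_square algebra_simps)
qed

lemma logistic_density_minus: "logistic_density (- u) = logistic_density u"
proof -
  have "1 + exp u > 0" "1 + exp (- u) > 0" by (simp_all add: add_pos_pos)
  then show ?thesis unfolding logistic_density_def sigmoid_def
    by (simp add: field_simps exp_minus)
qed

lemma has_real_derivative_logistic_density: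
  "(logistic_density has_real_derivative logistic_density u * (1 - 2 * sigmoid u)) (at u)"
proof -
  have "((\<lambda>u. sigmoid u * (1 - sigmoid u)) has_real_derivative
      logistic_density u * (1 - sigmoid u) + sigmoid u * (- logistic_density u)) (at u)"
    by (auto intro!: derivative_eq_intros has_real_derivative_sigmoid)
  then show ?thesis unfolding logistic_density_def[abs_def] by (simp add: algebra_simps)
qed

lemma lipschitz_logistic_density: "1-lipschitz_on UNIV logistic_density"
proof (rule lipschitz_onI)
  have deriv_bound: "\<bar>logistic_density u * (1 - 2 * sigmoid u)\<bar> \<le> 1" for u
  proof -
    have "\<bar>1 - 2 * sigmoid u\<bar> \<le> 1" using sigmoid_gt_zero[of u] sigmoid_less_one[of u] by simp
    moreover have "\<bar>logistic_density u\<bar> \<le> 1"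
      using logistic_density_nonneg[of u] logistic_density_le_quarter[of u] by simp
    ultimately show ?thesis by (simp add: abs_mult mult_le_one)
  qed
  show "dist (logistic_density x) (logistic_density y) \<le> 1 * dist x y" for x y
    using field_differentiable_bound[of UNIV logistic_density
        "\<lambda>u. logistic_density u * (1 - 2 * sigmoid u)" 1 x y]
    by (simp add: dist_real_def has_real_derivative_logistic_density deriv_bound)
qed simp

lemma continuous_on_logistic_density [continuous_intros]:
  "continuous_on A f \<Longrightarrow> continuous_on A (\<lambda>x. logistic_density (f x))"
  using lipschitz_on_continuous_on[OF lipschitz_logistic_density] by (rule continuous_on_compose2) auto

lemma sigmoid_tendsto_at_bot: "(sigmoid \<longlongrightarrow> 0) at_bot"
proof -
  have "filterlim (\<lambda>u::real. 1 + exp (- u)) at_top at_bot"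
    by (intro filterlim_tendsto_add_at_top[OF tendsto_const]
        filterlim_compose[OF exp_at_top filterlim_uminus_at_top_at_bot])
  then have "((\<lambda>u::real. inverse (1 + exp (- u))) \<longlongrightarrow> 0) at_bot"
    by (rule tendsto_inverse_0_at_top)
  then show ?thesis unfolding sigmoid_def[abs_def] by (simp add: divide_inverse)
qed

lemma sigmoid_tendsto_at_top: "(sigmoid \<longlongrightarrow> 1) at_top"
proof -
  have "((\<lambda>u::real. exp (- u)) \<longlongrightarrow> 0) at_top"
    by (rule filterlim_compose[OF exp_at_bot filterlim_uminus_at_bot_at_top])
  then have "((\<lambda>u::real. 1 / (1 + exp (- u))) \<longlongrightarrow> 1 / (1 + 0)) at_top"
    by (intro tendsto_intros) auto
  then show ?thesis unfolding sigmoid_def[abs_def] by simp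
qed

lemma integrable_logistic_density: "integrable lborel logistic_density"
proof -
  have "set_integrable lborel (einterval (- \<infinity>) \<infinity>) logistic_density"
  proof (rule interval_integral_FTC_nonneg[where F = sigmoid and A = 0 and B = 1])
    show "isCont logistic_density x" for x
      using continuous_on_logistic_density[OF continuous_on_id[of UNIV]]
      by (simp add: continuous_on_eq_continuous_at)
    show "((sigmoid \<circ> real_of_ereal) \<longlongrightarrow> 0) (at_right (- \<infinity>))"
      unfolding ereal_tendsto_simps1 by (rule sigmoid_tendsto_at_bot)
    show "((sigmoid \<circ> real_of_ereal) \<longlongrightarrow> 1) (at_left \<infinity>)"
      unfolding ereal_tendsto_simps1 by (rule sigmoid_tendsto_at_top)
  qed (simp_all add: has_real_derivative_sigmoid logistic_density_nonneg)
  then show ?thesis by (simp add: set_integrable_def)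
qed

lemma times_logistic_density_le:
  assumes "u \<ge> 0"
  shows "u * logistic_density u \<le> 8 * logistic_density (u / 2)"
proof -
  define b where "b = exp (- u / 2)"
  have b_pos: "0 < b" and b_le_1: "b \<le> 1" using assms by (auto simp: b_def)
  have exp_b: "exp (- u) = b^2" unfolding b_def by (simp add: power2_eq_square flip: exp_add)
  have "1 + u / 2 \<le> exp (u / 2)" using exp_ge_add_one_self[of "u / 2"] by simp
  then have ub: "u * b \<le> 2"
    unfolding b_def using assms by (simp add: exp_minus field_simps)
  have "u * logistic_density u = u * b^2 / (1 + b^2)^2" by (simp add: logistic_density_exp exp_b)
  also have "\<dots> \<le> u * b^2"
  proof -
    have "0 < 1 + b^2" "0 \<le> u * b^2" using assms by (simp_all add: add_pos_nonneg)
    then show ?thesis by (simp add: divide_le_eq mult_le_cancel_left1 one_le_power)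
  qed
  also have "\<dots> \<le> 2 * b" using ub b_pos by (simp add: power2_eq_square mult_right_mono)
  also have "\<dots> \<le> 8 * (b / (1 + b)^2)"
  proof -
    have "(1 + b)^2 \<le> 2^2" using b_pos b_le_1 by (intro power_mono) auto
    then show ?thesis using b_pos by (simp add: field_simps)
  qed
  also have "b / (1 + b)^2 = logistic_density (u / 2)" by (simp add: logistic_density_exp b_def)
  finally show ?thesis .
qed

lemma abs_times_logistic_density_le: "\<bar>u\<bar> * logistic_density u \<le> 8 * logistic_density (u / 2)"
  using times_logistic_density_le[of "\<bar>u\<bar>"] logistic_density_minus[of u] logistic_density_minus[of "u / 2"]
  by (cases "u \<ge> 0") auto

lemma integrable_abs_times_logistic_density: "integrable lborel (\<lambda>u. \<bar>u\<bar> * logistic_density u)"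
proof (rule Bochner_Integration.integrable_bound)
  have "integrable lborel (\<lambda>u. logistic_density (0 + (1 / 2) * u))"
    by (rule lborel_integrable_real_affine[OF integrable_logistic_density]) simp
  then show "integrable lborel (\<lambda>u. 8 * logistic_density (u / 2))" by simp
  show "(\<lambda>u. \<bar>u\<bar> * logistic_density u) \<in> borel_measurable lborel"
    by (simp add: borel_measurable_continuous_onI continuous_intros)
  show "AE u in lborel. norm (\<bar>u\<bar> * logistic_density u) \<le> norm (8 * logistic_density (u / 2))"
    using abs_times_logistic_density_le logistic_density_nonneg by (simp add: abs_mult)
qed

lemma continuous_on_comp_sigmoid:
  assumes "continuous_on {0..1} f"
  shows "continuous_on UNIV (\<lambda>u. f (sigmoid u))"
proof -
  have "continuous_on UNIV sigmoid"
    by (intro continuous_at_imp_continuous_on ballI DERIV_isCont[OF has_real_derivative_sigmoid])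
  then show ?thesis
    by (rule continuous_on_compose2[OF assms]) (use sigmoid_in_unit_interval in auto)
qed

lemma tendsto_comp_sigmoid:
  assumes "continuous_on {0..1} f"
  shows "((\<lambda>u. f (sigmoid u)) \<longlongrightarrow> f 0) at_bot" and "((\<lambda>u. f (sigmoid u)) \<longlongrightarrow> f 1) at_top"
  by (rule continuous_on_tendsto_compose[OF assms sigmoid_tendsto_at_bot]
      continuous_on_tendsto_compose[OF assms sigmoid_tendsto_at_top];
      use sigmoid_in_unit_interval in auto)+

lemma has_real_derivative_comp_sigmoid:
  assumes "\<And>x. 0 < x \<Longrightarrow> x < 1 \<Longrightarrow> (f has_real_derivative f' x) (at x)"
  shows "((\<lambda>u. f (sigmoid u)) has_real_derivative f' (sigmoid u) * logistic_density u) (at u)"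
  by (rule DERIV_chain2[OF assms has_real_derivative_sigmoid])
    (simp_all add: sigmoid_gt_zero sigmoid_less_one)

lemma integrable_comp_sigmoid_times_logistic_density:
  assumes "continuous_on {0..1} f"
  shows "integrable lborel (\<lambda>u. f (sigmoid u) * logistic_density u)"
proof -
  obtain M where M: "\<And>x. x \<in> {0..1} \<Longrightarrow> \<bar>f x\<bar> \<le> M"
    using compact_imp_bounded[OF compact_continuous_image[OF assms compact_Icc]]
    unfolding bounded_iff by force
  show ?thesis
  proof (rule Bochner_Integration.integrable_bound)
    show "integrable lborel (\<lambda>u. M * logistic_density u)"
      by (intro integrable_mult_right integrable_logistic_density)
    show "(\<lambda>u. f (sigmoid u) * logistic_density u) \<in> borel_measurable lborel"
      using continuous_on_comp_sigmoid[OF assms]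
      by (simp add: borel_measurable_continuous_onI continuous_intros)
    have "\<bar>f (sigmoid u)\<bar> * logistic_density u \<le> \<bar>M\<bar> * logistic_density u" for u
      by (intro mult_right_mono order_trans[OF M[OF sigmoid_in_unit_interval] abs_ge_self]
          logistic_density_nonneg)
    then show "AE u in lborel. norm (f (sigmoid u) * logistic_density u) \<le> norm (M * logistic_density u)"
      using logistic_density_nonneg by (simp add: abs_mult)
  qed
qed

lemma lborel_integral_eq_limits_diff:
  fixes F f :: "real \<Rightarrow> real"
  assumes F: "\<And>x. (F has_real_derivative f x) (at x)"
    and f_cont: "continuous_on UNIV f" and f_int: "integrable lborel f"
    and F_bot: "(F \<longlongrightarrow> a) at_bot" and F_top: "(F \<longlongrightarrow> b) at_top"
  shows "(LINT x|lborel. f x) = b - a"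
proof -
  have "(LBINT x=-\<infinity>..\<infinity>. f x) = b - a"
  proof (rule interval_integral_FTC_integrable)
    show "(F has_vector_derivative f x) (at x)" for x
      using F[of x] by (simp add: has_real_derivative_iff_has_vector_derivative)
    show "isCont f x" for x
      using f_cont by (simp add: continuous_on_eq_continuous_at)
    show "set_integrable lborel (einterval (-\<infinity>) \<infinity>) f"
      using f_int by (simp add: set_integrable_def)
    show "((F \<circ> real_of_ereal) \<longlongrightarrow> a) (at_right (-\<infinity>))"
      unfolding ereal_tendsto_simps1 by (rule F_bot)
    show "((F \<circ> real_of_ereal) \<longlongrightarrow> b) (at_left \<infinity>)"
      unfolding ereal_tendsto_simps1 by (rule F_top)
  qed simp
  then show ?thesis by (simp add: interval_lebesgue_integral_def set_lebesgue_integral_def)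
qed

lemma abs_integral_lipschitz_shift_diff_le:
  fixes h g w :: "real \<Rightarrow> real"
  assumes h: "C-lipschitz_on UNIV h"
    and g_int: "integrable lborel g"
    and g_le: "\<And>u. \<bar>g u\<bar> \<le> w u"
    and w_moment: "integrable lborel (\<lambda>u. \<bar>u\<bar> * w u)"
  shows "\<bar>(LINT u|lborel. h (\<eta> - \<tau> * u) * g u) - h \<eta> * (LINT u|lborel. g u)\<bar>
    \<le> C * \<bar>\<tau>\<bar> * (LINT u|lborel. \<bar>u\<bar> * w u)"
proof -
  define d where "d u = (h (\<eta> - \<tau> * u) - h \<eta>) * g u" for u
  have d_le: "\<bar>d u\<bar> \<le> C * \<bar>\<tau>\<bar> * (\<bar>u\<bar> * w u)" for u
  proof -
    have "\<bar>h (\<eta> - \<tau> * u) - h \<eta>\<bar> \<le> C * \<bar>\<tau>\<bar> * \<bar>u\<bar>"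
      using lipschitz_on_normD[OF h, of "\<eta> - \<tau> * u" \<eta>] by (simp add: abs_mult mult.assoc)
    then have "\<bar>d u\<bar> \<le> C * \<bar>\<tau>\<bar> * \<bar>u\<bar> * w u"
      unfolding d_def abs_mult using g_le[of u] lipschitz_on_nonneg[OF h] by (intro mult_mono) auto
    then show ?thesis by (simp add: mult.assoc)
  qed
  have [measurable]: "(\<lambda>u. h (\<eta> - \<tau> * u)) \<in> borel_measurable borel"
    by (intro borel_measurable_continuous_onI continuous_on_compose2[OF lipschitz_on_continuous_on[OF h]]
        continuous_intros) auto
  have [measurable]: "g \<in> borel_measurable borel"
    using borel_measurable_integrable[OF g_int] by simp
  have d_meas: "d \<in> borel_measurable lborel"
    unfolding d_def[abs_def] by measurable
  have d_int: "integrable lborel d"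
    by (rule Bochner_Integration.integrable_bound[OF integrable_mult_right[OF w_moment] d_meas])
      (use d_le in \<open>auto intro: order_trans[OF _ abs_ge_self]\<close>)
  have "(LINT u|lborel. h (\<eta> - \<tau> * u) * g u) = (LINT u|lborel. d u + h \<eta> * g u)"
    by (simp add: d_def algebra_simps)
  also have "\<dots> = (LINT u|lborel. d u) + h \<eta> * (LINT u|lborel. g u)"
    using d_int g_int by simp
  finally have "\<bar>(LINT u|lborel. h (\<eta> - \<tau> * u) * g u) - h \<eta> * (LINT u|lborel. g u)\<bar>
      = \<bar>LINT u|lborel. d u\<bar>" by simp
  also have "\<dots> \<le> (LINT u|lborel. C * \<bar>\<tau>\<bar> * (\<bar>u\<bar> * w u))"
    by (rule integral_abs_bound_integral[OF d_int integrable_mult_right[OF w_moment] d_le])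
  finally show ?thesis by simp
qed

lemma gs_expectation_eq_shifted_integral:
  assumes g: "\<And>u. ((\<lambda>u. L (sigmoid u)) has_real_derivative g u) (at u)" and "\<tau> > 0"
  shows "gs_expectation L \<tau> \<eta> = (LINT u|lborel. logistic_density (\<eta> - \<tau> * u) * g u)"
proof -
  have estimator: "gs_estimator L \<tau> \<eta> z = g ((\<eta> - z) / \<tau>) / \<tau>" for z
  proof -
    have "((\<lambda>e. L (sigmoid ((e - z) / \<tau>))) has_real_derivative g ((\<eta> - z) / \<tau>) * (1 / \<tau>)) (at \<eta>)"
      by (rule DERIV_chain2[OF g]) (use \<open>\<tau> > 0\<close> in \<open>auto intro!: derivative_eq_intros\<close>)
    then show ?thesis unfolding gs_estimator_def sigmoid_temp_def by (simp add: DERIV_imp_deriv)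
  qed
  have "gs_expectation L \<tau> \<eta> = (LINT z|lborel. logistic_density z * (g ((\<eta> - z) / \<tau>) / \<tau>))"
    by (simp add: gs_expectation_def estimator)
  also have "\<dots> = \<bar>- \<tau>\<bar> *\<^sub>R (LINT u|lborel. logistic_density (\<eta> + (- \<tau>) * u)
      * (g ((\<eta> - (\<eta> + (- \<tau>) * u)) / \<tau>) / \<tau>))"
    by (rule lborel_integral_real_affine) (use \<open>\<tau> > 0\<close> in simp)
  also have "\<dots> = (LINT u|lborel. logistic_density (\<eta> - \<tau> * u) * g u)"
    using \<open>\<tau> > 0\<close> by simp
  finally show ?thesis .
qed

lemma gs_expectation_bias_le:
  fixes L L' :: "real \<Rightarrow> real"
  assumes L_deriv: "\<And>x. 0 < x \<Longrightarrow> x < 1 \<Longrightarrow> (L has_real_derivative L' x) (at x)"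
    and cont_L: "continuous_on {0..1} L" and cont_L': "continuous_on {0..1} L'"
    and M: "\<And>x. x \<in> {0..1} \<Longrightarrow> \<bar>L' x\<bar> \<le> M" and "\<tau> > 0"
  shows "\<bar>gs_expectation L \<tau> \<eta> - logistic_density \<eta> * (L 1 - L 0)\<bar>
    \<le> M * (LINT u|lborel. \<bar>u\<bar> * logistic_density u) * \<tau>"
proof -
  define g where "g u = L' (sigmoid u) * logistic_density u" for u
  have g_deriv: "((\<lambda>u. L (sigmoid u)) has_real_derivative g u) (at u)" for u
    unfolding g_def using L_deriv by (rule has_real_derivative_comp_sigmoid)
  have g_int: "integrable lborel g"
    unfolding g_def[abs_def] by (rule integrable_comp_sigmoid_times_logistic_density[OF cont_L'])
  have g_le: "\<bar>g u\<bar> \<le> M * logistic_density u" for u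
    unfolding g_def using M[OF sigmoid_in_unit_interval] logistic_density_nonneg[of u]
    by (simp add: abs_mult mult_right_mono)
  have g_total: "(LINT u|lborel. g u) = L 1 - L 0"
  proof (rule lborel_integral_eq_limits_diff[OF g_deriv _ g_int tendsto_comp_sigmoid[OF cont_L]])
    show "continuous_on UNIV g"
      unfolding g_def[abs_def] by (intro continuous_intros continuous_on_comp_sigmoid[OF cont_L'])
  qed
  show ?thesis
    using abs_integral_lipschitz_shift_diff_le[OF lipschitz_logistic_density g_int g_le, of \<eta> \<tau>]
      integrable_mult_right[OF integrable_abs_times_logistic_density, of M]
      gs_expectation_eq_shifted_integral[OF g_deriv \<open>\<tau> > 0\<close>] g_total \<open>\<tau> > 0\<close>
    by (simp add: mult_ac)
qed

lemma linear_bound_imp_tendsto_bigo_at_right: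
  fixes f :: "real \<Rightarrow> real"
  assumes "\<And>\<tau>. \<tau> > 0 \<Longrightarrow> \<bar>f \<tau> - c\<bar> \<le> K * \<tau>"
  shows "(f \<longlongrightarrow> c) (at_right 0) \<and> (\<lambda>\<tau>. f \<tau> - c) \<in> O[at_right 0](\<lambda>\<tau>. \<tau>)"
proof -
  have bound: "\<forall>\<^sub>F \<tau> in at_right 0. norm (f \<tau> - c) \<le> K * norm \<tau>"
    using eventually_at_right_less[of 0] by eventually_elim (use assms in auto)
  have "((\<lambda>\<tau>. f \<tau> - c) \<longlongrightarrow> 0) (at_right 0)"
    by (rule Lim_null_comparison[OF bound]) (auto intro!: tendsto_eq_intros)
  then show ?thesis
    using bigoI[OF bound] by (simp add: LIM_zero_iff)
qed

theorem propositionE1: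
  fixes L L' :: "real \<Rightarrow> real" and \<eta> :: real
  assumes deriv_L: "\<And>x. x \<in> {0..1} \<Longrightarrow> (L has_real_derivative L' x) (at x within {0..1})"
    and cont_L': "continuous_on {0..1} L'"
  shows "((\<lambda>\<tau>. gs_expectation L \<tau> \<eta>) \<longlongrightarrow> logistic_density \<eta> * (L 1 - L 0)) (at_right 0)
         \<and> (\<lambda>\<tau>. gs_expectation L \<tau> \<eta> - logistic_density \<eta> * (L 1 - L 0)) \<in> O[at_right 0](\<lambda>\<tau>. \<tau>)"
proof -
  obtain M where M: "\<And>x. x \<in> {0..1} \<Longrightarrow> \<bar>L' x\<bar> \<le> M"
    using compact_imp_bounded[OF compact_continuous_image[OF cont_L' compact_Icc]]
    unfolding bounded_iff by force
  have cont_L: "continuous_on {0..1} L"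
    using deriv_L DERIV_continuous continuous_on_eq_continuous_within by blast
  have L_deriv: "(L has_real_derivative L' x) (at x)" if "0 < x" "x < 1" for x
    using deriv_L[of x] at_within_Icc_at[OF that] that by simp
  show ?thesis
    by (rule linear_bound_imp_tendsto_bigo_at_right)
      (rule gs_expectation_bias_le[OF L_deriv cont_L cont_L' M])
qed

end
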